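(* Let $V = \{v_1, \dots, v_n\}$ be floating-point values (each zero or a normal IEEE 754 double), let $\alpha_i = DP(v_i)$ and $\alpha_{max} = \max\{\alpha_1, \dots, \alpha_n\}$. For each $i$ let $\hat{\beta}_i = \alpha_{max} + \lfloor \log_{10}|v_i| \rfloor + 1$ if $v_i \neq 0$ and $\hat{\beta}_i = 0$ if $v_i = 0$, and let $\hat{\beta}_{max} = \max\{\hat{\beta}_1, \dots, \hat{\beta}_n\}$. Let $g_i = round(v_i \otimes 10^{\alpha_{max}})$. If $\alpha_{max} \le 22$ and $\hat{\beta}_{max} \le 15$, then $v_i = g_i \div 10^{\alpha_{max}}$ for all $1 \le i \le n$, where the division is performed in IEEE 754 double-precision arithmetic.
   Context: Convention: a floating-point value $v$ is identified with the decimal number given by its decimal format, i.e. its shortest decimal representation that reads back to $v$. For a nonzero terminating decimal $x$, the decimal place $DP(x)$ is the least nonnegative integer $j$ with $x \times 10^j$ an integer; $DP(0)=0$. $v \otimes 10^{i}$ and $a \div 10^i$ denote multiplication and division computed in IEEE 754 double-precision arithmetic (round-to-nearest), with $10^i$ represented as a double. $round(\cdot)$ denotes rounding to the nearest integer. *)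

theory Defs
  imports Complex_Main "HOL-Library.Extended_Real"
begin

text \<open>Finite doubles (normal and subnormal; signed zero is identified with 0):
  m * 2^e with |m| < 2^53 and -1074 \<le> e \<le> 971.\<close>
definition dbl_finite :: "real set" where
  "dbl_finite = {of_int m * 2 powi e | m e. \<bar>m\<bar> < 2^53 \<and> -1074 \<le> e \<and> e \<le> 971}"

definition dbl_normal :: "real \<Rightarrow> bool" where
  "dbl_normal v \<longleftrightarrow> v \<in> dbl_finite \<and> 2 powi (-1022) \<le> \<bar>v\<bar>"

definition dbl_even :: "real \<Rightarrow> bool" where
  "dbl_even r \<longleftrightarrow> (\<exists>m e. r = of_int m * 2 powi e \<and> even m \<and> \<bar>m\<bar> < 2^53 \<and> -1074 \<le> e \<and> e \<le> 971)"

definition is_rne :: "real \<Rightarrow> real \<Rightarrow> bool" where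
  "is_rne x r \<longleftrightarrow> r \<in> dbl_finite \<and> (\<forall>s\<in>dbl_finite. \<bar>x - r\<bar> \<le> \<bar>x - s\<bar>) \<and>
     ((\<forall>s\<in>dbl_finite. \<bar>x - s\<bar> = \<bar>x - r\<bar> \<longrightarrow> s = r) \<or> dbl_even r)"

definition dbl_round :: "real \<Rightarrow> ereal" where
  "dbl_round x = (if 2^1024 - 2^970 \<le> x then PInfty
                  else if x \<le> - (2^1024 - 2^970) then MInfty
                  else ereal (THE r. is_rne x r))"

definition dmul :: "real \<Rightarrow> real \<Rightarrow> ereal" where
  "dmul a b = dbl_round (a * b)"

definition ddiv :: "real \<Rightarrow> real \<Rightarrow> ereal" where
  "ddiv a b = dbl_round (a / b)"

definition dbl_pow10 :: "nat \<Rightarrow> real" where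
  "dbl_pow10 i = real_of_ereal (dbl_round (10 ^ i))"

definition is_decimal :: "real \<Rightarrow> bool" where
  "is_decimal x \<longleftrightarrow> (\<exists>(m::int) (j::nat). x = of_int m / 10 ^ j)"

definition DP :: "real \<Rightarrow> nat" where
  "DP x = (LEAST j::nat. x * 10 ^ j \<in> \<int>)"

definition sig_digits :: "real \<Rightarrow> nat" where
  "sig_digits x = (LEAST k::nat. \<exists>(m::int) (e::int). x = of_int m * 10 powi e \<and> \<bar>m\<bar> < 10 ^ k)"

definition dec_reps :: "real \<Rightarrow> real set" where
  "dec_reps v = {x. is_decimal x \<and> dbl_round x = ereal v}"

definition shortest_reps :: "real \<Rightarrow> real set" where
  "shortest_reps v = {x \<in> dec_reps v. \<forall>y\<in>dec_reps v. sig_digits x \<le> sig_digits y}"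

definition decfmt :: "real \<Rightarrow> real" where
  "decfmt v = (SOME x. x \<in> shortest_reps v \<and> (\<forall>y\<in>shortest_reps v. \<bar>x - v\<bar> \<le> \<bar>y - v\<bar>))"

definition round_int :: "real \<Rightarrow> int" where
  "round_int x = \<lfloor>x + 1/2\<rfloor>"

end

theory Submission
  imports Defs
begin

text \<open>
  Let v be a nonzero value with decimal format d and write a for \<alpha>max. Since DP d \<le> a, the
  number N = d * 10^a is an integer, and the bound on \<beta>max gives |N| < 10^15 < 2^50.
  Because d rounds to the normal double v, |d - v| \<le> |d| / 2^52, so v * 10^a lies within
  |N| / 2^52 < 1/4 of N. For a \<le> 22 both 10^a and N are exact doubles, hence the computed
  product rounds to within 1/2 of N, its nearest integer is N, and N / 10^a = d rounds back to v.
  Most of the work lies in showing that round-to-nearest-even is well defined on the model of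
  doubles, which comes down to the fact that adjacent doubles have opposite parity.
\<close>

lemma dbl_finiteI:
  "\<bar>m\<bar> < 2^53 \<Longrightarrow> -1074 \<le> e \<Longrightarrow> e \<le> 971 \<Longrightarrow> of_int m * 2 powi e \<in> dbl_finite"
  unfolding dbl_finite_def by blast

lemma dbl_finiteE:
  assumes "x \<in> dbl_finite"
  obtains m e where "x = of_int m * 2 powi e" "\<bar>m\<bar> < 2^53" "-1074 \<le> e" "e \<le> 971"
  using assms unfolding dbl_finite_def by blast

lemma dbl_evenI:
  "even m \<Longrightarrow> \<bar>m\<bar> < 2^53 \<Longrightarrow> -1074 \<le> e \<Longrightarrow> e \<le> 971 \<Longrightarrow> dbl_even (of_int m * 2 powi e)"
  unfolding dbl_even_def by blast

lemma dbl_evenE: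
  assumes "dbl_even x"
  obtains m e where "x = of_int m * 2 powi e" "even m" "\<bar>m\<bar> < 2^53" "-1074 \<le> e" "e \<le> 971"
  using assms unfolding dbl_even_def by blast

lemma dbl_even_imp_dbl_finite: "dbl_even x \<Longrightarrow> x \<in> dbl_finite"
  by (elim dbl_evenE) (simp add: dbl_finiteI)

lemma zero_dbl_finite: "0 \<in> dbl_finite"
  using dbl_finiteI[of 0 0] by simp

lemma uminus_dbl_finite: "x \<in> dbl_finite \<Longrightarrow> -x \<in> dbl_finite"
proof (elim dbl_finiteE)
  fix m e :: int
  assume "x = of_int m * 2 powi e" "\<bar>m\<bar> < 2^53" "-1074 \<le> e" "e \<le> 971"
  then show "-x \<in> dbl_finite"
    using dbl_finiteI[of "-m" e] by simp
qed

lemma uminus_dbl_finite_iff [simp]: "-x \<in> dbl_finite \<longleftrightarrow> x \<in> dbl_finite"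
  using uminus_dbl_finite[of x] uminus_dbl_finite[of "-x"] by auto

lemma dbl_even_uminus: "dbl_even x \<Longrightarrow> dbl_even (-x)"
proof (elim dbl_evenE)
  fix m e :: int
  assume "x = of_int m * 2 powi e" "even m" "\<bar>m\<bar> < 2^53" "-1074 \<le> e" "e \<le> 971"
  then show "dbl_even (-x)"
    using dbl_evenI[of "-m" e] by simp
qed

lemma dbl_even_uminus_iff [simp]: "dbl_even (-x) \<longleftrightarrow> dbl_even x"
  using dbl_even_uminus[of x] dbl_even_uminus[of "-x"] by auto

lemma finite_dbl_finite: "finite dbl_finite"
proof -
  have "dbl_finite \<subseteq> (\<lambda>(m, e). of_int m * 2 powi e) ` ({-(2^53)..2^53} \<times> {-1074..971})"
  proof
    fix x
    assume "x \<in> dbl_finite"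
    then obtain m e where "x = of_int m * 2 powi e" "\<bar>m\<bar> < 2^53" "-1074 \<le> e" "e \<le> 971"
      by (rule dbl_finiteE)
    then show "x \<in> (\<lambda>(m, e). of_int m * 2 powi e) ` ({-(2^53)..2^53} \<times> {-1074..971})"
      by (intro image_eqI[of _ _ "(m, e)"]) auto
  qed
  then show ?thesis
    by (rule finite_subset) simp
qed

lemma dbl_finite_bound: "x \<in> dbl_finite \<Longrightarrow> \<bar>x\<bar> < 2^1024 - 2^970"
proof (elim dbl_finiteE)
  fix m e :: int
  assume x: "x = of_int m * 2 powi e" and m: "\<bar>m\<bar> < 2^53" and e: "e \<le> 971"
  have "real_of_int \<bar>m\<bar> \<le> real_of_int (2^53 - 1)"
    using m by (simp only: of_int_le_iff)
  then have "\<bar>of_int m\<bar> \<le> (2^53 - 1 :: real)"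
    by simp
  moreover have "(2::real) powi e \<le> 2 powi 971"
    using e by (rule power_int_increasing) simp
  ultimately have "\<bar>x\<bar> \<le> (2^53 - 1) * 2 powi 971"
    unfolding x abs_mult by (intro mult_mono) simp_all
  also have "\<dots> < 2^1024 - 2^970"
    by simp
  finally show "\<bar>x\<bar> < 2^1024 - 2^970" .
qed

lemma two_powi_shift:
  fixes e e' :: int
  assumes "e \<le> e'"
  shows "of_int b * (2::real) powi e' = of_int (b * 2 ^ nat (e' - e)) * 2 powi e"
proof -
  have "e' = int (nat (e' - e)) + e"
    using assms by simp
  then have "(2::real) powi e' = 2 ^ nat (e' - e) * 2 powi e"
    by (metis power_int_add power_int_of_nat zero_neq_numeral)
  then show ?thesis
    by simp
qed

lemma dbl_finite_succ:
  fixes m e :: int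
  assumes "\<bar>m\<bar> < 2^53" "-1074 \<le> e" "e \<le> 971" "m + 1 < 2^53 \<or> e < 971"
  shows "of_int (m + 1) * 2 powi e \<in> dbl_finite"
    and "odd m \<Longrightarrow> dbl_even (of_int (m + 1) * 2 powi e)"
proof -
  let ?s = "of_int (m + 1) * (2::real) powi e"
  have "?s \<in> dbl_finite \<and> (odd m \<longrightarrow> dbl_even ?s)"
  proof (cases "m + 1 < 2^53")
    case True
    with assms have "\<bar>m + 1\<bar> < 2^53"
      by simp
    with assms show ?thesis
      using dbl_finiteI[of "m + 1" e] dbl_evenI[of "m + 1" e] by simp
  next
    case False
    with assms have "m + 1 = 2^53" "e < 971"
      by auto
    then have "?s = of_int (2^52) * 2 powi (e + 1)"
      by (simp add: power_int_add)
    then have "dbl_even ?s"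
      using assms \<open>e < 971\<close> dbl_evenI[of "2^52" "e + 1"] by simp
    then show ?thesis
      by (simp add: dbl_even_imp_dbl_finite)
  qed
  then show "?s \<in> dbl_finite" "odd m \<Longrightarrow> dbl_even ?s"
    by simp_all
qed

lemma dbl_adjacent_succ:
  fixes a b e e' :: int
  assumes a: "\<bar>a\<bar> < 2^53" "-1074 \<le> e" and b: "\<bar>b\<bar> < 2^53" "e' \<le> 971" and "e \<le> e'"
    and less: "of_int a * 2 powi e < (of_int b * 2 powi e' :: real)"
    and adjacent: "\<forall>s\<in>dbl_finite. \<not> (of_int a * 2 powi e < s \<and> s < of_int b * 2 powi e')"
  shows "a + 1 = b * 2 ^ nat (e' - e)"
    and "odd a \<Longrightarrow> dbl_even (of_int b * (2::real) powi e')"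
proof -
  define k where "k = nat (e' - e)"
  have b_shift: "of_int b * (2::real) powi e' = of_int (b * 2^k) * 2 powi e"
    unfolding k_def using two_powi_shift[OF \<open>e \<le> e'\<close>] .
  have "of_int a * 2 powi e < of_int (b * 2^k) * (2::real) powi e"
    using less unfolding b_shift .
  then have "of_int a < (of_int (b * 2^k) :: real)"
    by (rule mult_right_less_imp_less) simp
  then have "a < b * 2^k"
    by (simp only: of_int_less_iff)
  have "a + 1 < 2^53 \<or> e < 971"
  proof (rule ccontr)
    assume "\<not> ?thesis"
    then have "\<bar>b\<bar> < b * 2^k" "e = e'"
      using \<open>a < b * 2^k\<close> b \<open>e \<le> e'\<close> by auto
    then show False
      unfolding k_def by simp
  qed
  note succ = dbl_finite_succ[OF a _ this]
  have "of_int a * 2 powi e < of_int (a + 1) * (2::real) powi e"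
    by simp
  moreover have "of_int (a + 1) \<le> (of_int (b * 2^k) :: real)"
    using \<open>a < b * 2^k\<close> by (simp only: of_int_le_iff)
  then have "of_int (a + 1) * (2::real) powi e \<le> of_int b * 2 powi e'"
    unfolding b_shift by (rule mult_right_mono) simp
  ultimately have succ_eq: "of_int (a + 1) * (2::real) powi e = of_int b * 2 powi e'"
    using adjacent succ(1) \<open>e \<le> e'\<close> b by fastforce
  then have "a + 1 = b * 2^k"
    unfolding b_shift by (simp only: mult_cancel_right of_int_eq_iff) simp
  then show "a + 1 = b * 2 ^ nat (e' - e)"
    unfolding k_def .
  show "dbl_even (of_int b * (2::real) powi e')" if "odd a"
    using succ(2) that \<open>e \<le> e'\<close> b succ_eq by simp
qed

lemma dbl_adjacent_parity_ordered:
  fixes a b e e' :: int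
  assumes "\<bar>a\<bar> < 2^53" "-1074 \<le> e" "\<bar>b\<bar> < 2^53" "e' \<le> 971" "e \<le> e'"
    and "of_int a * 2 powi e < (of_int b * 2 powi e' :: real)"
    and "\<forall>s\<in>dbl_finite. \<not> (of_int a * 2 powi e < s \<and> s < of_int b * 2 powi e')"
  shows "(odd a \<or> odd b) \<and> (dbl_even (of_int a * 2 powi e) \<or> dbl_even (of_int b * (2::real) powi e'))"
proof (cases "even a")
  case True
  then have "odd (b * 2 ^ nat (e' - e))"
    by (simp flip: dbl_adjacent_succ(1)[OF assms])
  then have "odd b"
    by simp
  moreover have "dbl_even (of_int a * 2 powi e)"
    using True assms by (intro dbl_evenI) simp_all
  ultimately show ?thesis
    by simp
next
  case False
  then show ?thesis
    using dbl_adjacent_succ(2)[OF assms] by simp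
qed

text \<open>Negation reverses the order of r1 and r2, so it reduces the general case to the one in which
  r2 has the larger exponent.\<close>

lemma dbl_adjacent_reps_parity:
  fixes a b e e' :: int
  assumes r1: "r1 = of_int a * 2 powi e" "\<bar>a\<bar> < 2^53" "-1074 \<le> e" "e \<le> 971"
    and r2: "r2 = of_int b * 2 powi e'" "\<bar>b\<bar> < 2^53" "-1074 \<le> e'" "e' \<le> 971"
    and less: "r1 < r2" and adjacent: "\<forall>s\<in>dbl_finite. \<not> (r1 < s \<and> s < r2)"
  shows "(odd a \<or> odd b) \<and> (dbl_even r1 \<or> dbl_even r2)"
proof (cases "e \<le> e'")
  case True
  show ?thesis
    unfolding r1(1) r2(1)
    by (rule dbl_adjacent_parity_ordered[OF r1(2,3) r2(2,4) True]) (use less adjacent r1 r2 in simp_all)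
next
  case False
  have adjacent': "\<forall>s\<in>dbl_finite. \<not> (of_int (-b) * 2 powi e' < s \<and> s < of_int (-a) * (2::real) powi e)"
  proof (intro ballI notI)
    fix s
    assume "s \<in> dbl_finite" "of_int (-b) * 2 powi e' < s \<and> s < of_int (-a) * (2::real) powi e"
    then have "-s \<in> dbl_finite" "r1 < -s \<and> -s < r2"
      using r1(1) r2(1) by auto
    then show False
      using adjacent by blast
  qed
  have "(odd (-b) \<or> odd (-a)) \<and>
      (dbl_even (of_int (-b) * 2 powi e') \<or> dbl_even (of_int (-a) * (2::real) powi e))"
    by (rule dbl_adjacent_parity_ordered[OF _ _ _ _ _ _ adjacent']) (use False r1 r2 less in simp_all)
  then show ?thesis
    unfolding r1(1) r2(1)
    by (simp only: of_int_minus mult_minus_left dbl_even_uminus_iff even_minus) blast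
qed

lemma dbl_adjacent_parity:
  assumes "r1 \<in> dbl_finite" "r2 \<in> dbl_finite" "r1 < r2"
    and adjacent: "\<forall>s\<in>dbl_finite. \<not> (r1 < s \<and> s < r2)"
  shows "dbl_even r1 \<or> dbl_even r2" and "\<not> (dbl_even r1 \<and> dbl_even r2)"
proof -
  obtain a e where r1: "r1 = of_int a * 2 powi e" "\<bar>a\<bar> < 2^53" "-1074 \<le> e" "e \<le> 971"
    using assms(1) by (rule dbl_finiteE)
  obtain b e' where r2: "r2 = of_int b * 2 powi e'" "\<bar>b\<bar> < 2^53" "-1074 \<le> e'" "e' \<le> 971"
    using assms(2) by (rule dbl_finiteE)
  show "dbl_even r1 \<or> dbl_even r2"
    using dbl_adjacent_reps_parity[OF r1 r2 assms(3) adjacent] by blast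
  show "\<not> (dbl_even r1 \<and> dbl_even r2)"
  proof
    assume "dbl_even r1 \<and> dbl_even r2"
    then obtain a e b e' where
        r1: "r1 = of_int a * 2 powi e" "even a" "\<bar>a\<bar> < 2^53" "-1074 \<le> e" "e \<le> 971"
      and r2: "r2 = of_int b * 2 powi e'" "even b" "\<bar>b\<bar> < 2^53" "-1074 \<le> e'" "e' \<le> 971"
      by (blast elim: dbl_evenE)
    then show False
      using dbl_adjacent_reps_parity[OF r1(1,3-5) r2(1,3-5) assms(3) adjacent] by blast
  qed
qed

lemma is_rne_unique:
  assumes "is_rne x r1" "is_rne x r2"
  shows "r1 = r2"
proof -
  have False if "is_rne x r1" "is_rne x r2" "r1 < r2" for r1 r2
  proof -
    have r1: "r1 \<in> dbl_finite" "\<forall>s\<in>dbl_finite. \<bar>x - r1\<bar> \<le> \<bar>x - s\<bar>"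
        "(\<forall>s\<in>dbl_finite. \<bar>x - s\<bar> = \<bar>x - r1\<bar> \<longrightarrow> s = r1) \<or> dbl_even r1"
      using that(1) unfolding is_rne_def by blast+
    have r2: "r2 \<in> dbl_finite" "\<forall>s\<in>dbl_finite. \<bar>x - r2\<bar> \<le> \<bar>x - s\<bar>"
        "(\<forall>s\<in>dbl_finite. \<bar>x - s\<bar> = \<bar>x - r2\<bar> \<longrightarrow> s = r2) \<or> dbl_even r2"
      using that(2) unfolding is_rne_def by blast+
    have tie: "\<bar>x - r1\<bar> = \<bar>x - r2\<bar>"
      using r1(2)[rule_format, OF r2(1)] r2(2)[rule_format, OF r1(1)] by linarith
    then have "dbl_even r1" "dbl_even r2"
      using r1(1,3) r2(1,3) \<open>r1 < r2\<close> by auto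
    moreover have "\<forall>s\<in>dbl_finite. \<not> (r1 < s \<and> s < r2)"
    proof (intro ballI notI)
      fix s
      assume "s \<in> dbl_finite" "r1 < s \<and> s < r2"
      moreover from this have "\<bar>x - r1\<bar> \<le> \<bar>x - s\<bar>"
        using r1(2) by blast
      ultimately show False
        using tie by arith
    qed
    ultimately show False
      using dbl_adjacent_parity(2) r1(1) r2(1) \<open>r1 < r2\<close> by blast
  qed
  then show ?thesis
    using assms less_linear[of r1 r2] by blast
qed

lemma is_rne_exists: "\<exists>r. is_rne x r"
proof -
  let ?dist = "\<lambda>s. \<bar>x - s\<bar>"
  define r0 where "r0 = arg_min_on ?dist dbl_finite"
  have nonempty: "dbl_finite \<noteq> {}"
    using zero_dbl_finite by blast
  have r0: "r0 \<in> dbl_finite"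
    unfolding r0_def using arg_min_if_finite(1)[OF finite_dbl_finite nonempty] .
  have nearest: "\<forall>s\<in>dbl_finite. ?dist r0 \<le> ?dist s"
    unfolding r0_def using arg_min_least[OF finite_dbl_finite nonempty, of _ ?dist] by blast
  have even_nearest: "is_rne x r" if "r \<in> dbl_finite" "?dist r = ?dist r0" "dbl_even r" for r
    unfolding is_rne_def using that nearest by simp
  show ?thesis
  proof (cases "\<forall>s\<in>dbl_finite. ?dist s = ?dist r0 \<longrightarrow> s = r0")
    case True
    then have "is_rne x r0"
      unfolding is_rne_def using r0 nearest by simp
    then show ?thesis ..
  next
    case False
    then obtain r1 where r1: "r1 \<in> dbl_finite" "?dist r1 = ?dist r0" "r1 \<noteq> r0"
      by blast
    define lo hi where "lo = min r0 r1" and "hi = max r0 r1"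
    have lo_hi: "lo \<in> dbl_finite" "hi \<in> dbl_finite" "lo < hi" "?dist lo = ?dist r0" "?dist hi = ?dist r0"
      using r0 r1 unfolding lo_def hi_def by (auto simp: min_def max_def)
    have "\<forall>s\<in>dbl_finite. \<not> (lo < s \<and> s < hi)"
    proof (intro ballI notI)
      fix s
      assume "s \<in> dbl_finite" "lo < s \<and> s < hi"
      moreover from this have "?dist r0 \<le> ?dist s"
        using nearest by blast
      ultimately show False
        using lo_hi(3-5) by arith
    qed
    then have "dbl_even lo \<or> dbl_even hi"
      using dbl_adjacent_parity(1) lo_hi(1-3) by blast
    then show ?thesis
      using even_nearest lo_hi by blast
  qed
qed

lemma dbl_round_eq_ereal_iff:
  "dbl_round x = ereal r \<longleftrightarrow> \<bar>x\<bar> < 2^1024 - 2^970 \<and> is_rne x r"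
proof -
  have unique: "\<exists>!r. is_rne x r"
    using is_rne_exists is_rne_unique by blast
  have "(THE r. is_rne x r) = r \<longleftrightarrow> is_rne x r"
    using theI'[OF unique] the1_equality[OF unique] by blast
  then show ?thesis
    unfolding dbl_round_def by auto
qed

lemma is_rne_self: "x \<in> dbl_finite \<Longrightarrow> is_rne x x"
  unfolding is_rne_def by simp

lemma dbl_round_dbl_finite: "x \<in> dbl_finite \<Longrightarrow> dbl_round x = ereal x"
  using dbl_round_eq_ereal_iff dbl_finite_bound is_rne_self by blast

lemma dbl_normalize:
  fixes v :: real and m e :: int
  assumes "v = of_int m * 2 powi e" "\<bar>m\<bar> < 2^53" "-1074 \<le> e" "e \<le> 971"
    and normal: "2 powi (-1022) \<le> \<bar>v\<bar>"
  shows "\<exists>M E. v = of_int M * 2 powi E \<and> 2^52 \<le> \<bar>M\<bar> \<and> \<bar>M\<bar> < 2^53 \<and> -1074 \<le> E \<and> E \<le> 971"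
  using assms(1-4)
proof (induction "nat (e + 1074)" arbitrary: m e rule: less_induct)
  case less
  show ?case
  proof (cases "2^52 \<le> \<bar>m\<bar>")
    case True
    then show ?thesis
      using less.prems by blast
  next
    case False
    have "e \<noteq> -1074"
    proof
      assume "e = -1074"
      have "real_of_int \<bar>m\<bar> < real_of_int (2^52)"
        using False by (simp only: of_int_less_iff not_le)
      then have "\<bar>of_int m\<bar> < (2^52 :: real)"
        by simp
      then have "\<bar>v\<bar> < 2^52 * 2 powi (-1074)"
        using less.prems(1) \<open>e = -1074\<close> by (simp add: abs_mult)
      then show False
        using normal by (simp add: power_int_diff)
    qed
    then have "nat (e - 1 + 1074) < nat (e + 1074)"
      using less.prems(3) by simp
    moreover have "v = of_int (2 * m) * 2 powi (e - 1)"
      using less.prems(1) by (simp add: power_int_diff)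
    moreover have "\<bar>2 * m\<bar> < 2^53"
      using False by simp
    ultimately show ?thesis
      using less.prems(3,4) \<open>e \<noteq> -1074\<close> by (intro less.hyps[of "e - 1" "2 * m"]) simp_all
  qed
qed

lemma dbl_normalE:
  assumes "dbl_normal v"
  obtains M E where "v = of_int M * 2 powi E" "2^52 \<le> \<bar>M\<bar>" "\<bar>M\<bar> < 2^53" "-1074 \<le> E" "E \<le> 971"
proof -
  obtain m e where "v = of_int m * 2 powi e" "\<bar>m\<bar> < 2^53" "-1074 \<le> e" "e \<le> 971"
    using assms unfolding dbl_normal_def by (blast elim: dbl_finiteE)
  moreover have "2 powi (-1022) \<le> \<bar>v\<bar>"
    using assms unfolding dbl_normal_def by blast
  ultimately show ?thesis
    using dbl_normalize that by blast
qed

lemma is_rne_uminus: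
  assumes "is_rne x r"
  shows "is_rne (-x) (-r)"
proof -
  have r: "r \<in> dbl_finite" and nearest: "\<forall>s\<in>dbl_finite. \<bar>x - r\<bar> \<le> \<bar>x - s\<bar>"
    and tie: "(\<forall>s\<in>dbl_finite. \<bar>x - s\<bar> = \<bar>x - r\<bar> \<longrightarrow> s = r) \<or> dbl_even r"
    using assms unfolding is_rne_def by blast+
  have "\<bar>-x - -r\<bar> \<le> \<bar>-x - s\<bar>" if "s \<in> dbl_finite" for s
  proof -
    have "\<bar>x - r\<bar> \<le> \<bar>x - (-s)\<bar>"
      using nearest uminus_dbl_finite[OF that] by blast
    then show ?thesis
      by arith
  qed
  moreover have "(\<forall>s\<in>dbl_finite. \<bar>-x - s\<bar> = \<bar>-x - -r\<bar> \<longrightarrow> s = -r) \<or> dbl_even (-r)"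
  proof (cases "dbl_even r")
    case False
    have "s = -r" if "s \<in> dbl_finite" "\<bar>-x - s\<bar> = \<bar>-x - -r\<bar>" for s
    proof -
      have "-s \<in> dbl_finite" "\<bar>x - (-s)\<bar> = \<bar>x - r\<bar>"
        using that by (simp, arith)
      then have "-s = r"
        using tie False by blast
      then show "s = -r"
        by simp
    qed
    then show ?thesis
      by blast
  qed simp
  ultimately show ?thesis
    unfolding is_rne_def using r by simp
qed

lemma is_rne_abs_le: "is_rne x r \<Longrightarrow> \<bar>r\<bar> \<le> 2 * \<bar>x\<bar>"
  unfolding is_rne_def using zero_dbl_finite by force

lemma is_rne_err_above:
  assumes rne: "is_rne x v" and bound: "\<bar>x\<bar> < 2^1024 - 2^970"
    and v: "v = of_int M * 2 powi E" "\<bar>M\<bar> < 2^53" "-1074 \<le> E" "E \<le> 971"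
  shows "x - v \<le> 2 powi E / 2"
proof (rule ccontr)
  assume far: "\<not> x - v \<le> 2 powi E / 2"
  \<comment> \<open>The overflow threshold is the largest double plus half its spacing, so only the largest
    double lacks an upper neighbour, and x cannot lie that far above it.\<close>
  have "M + 1 < 2^53 \<or> E < 971"
  proof (rule ccontr)
    assume "\<not> ?thesis"
    then have "M = 2^53 - 1" "E = 971"
      using v by auto
    then have "v + 2 powi E / 2 = 2^1024 - 2^970"
      using v(1) by simp
    then show False
      using far bound by linarith
  qed
  then have "v + 2 powi E \<in> dbl_finite"
    using dbl_finite_succ(1)[OF v(2-4)] v(1) by (simp add: distrib_right)
  then have "\<bar>x - v\<bar> \<le> \<bar>x - (v + 2 powi E)\<bar>"
    using rne unfolding is_rne_def by blast
  moreover have "(0::real) < 2 powi E"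
    by simp
  ultimately show False
    using far by arith
qed

lemma is_rne_err_le:
  assumes "is_rne x v" "\<bar>x\<bar> < 2^1024 - 2^970"
    and "v = of_int M * 2 powi E" "\<bar>M\<bar> < 2^53" "-1074 \<le> E" "E \<le> 971"
  shows "\<bar>x - v\<bar> \<le> 2 powi E / 2"
proof -
  have "x - v \<le> 2 powi E / 2"
    by (rule is_rne_err_above[OF assms])
  moreover have "-x - -v \<le> 2 powi E / 2"
    by (rule is_rne_err_above[OF is_rne_uminus[OF assms(1)], of "-M"]) (use assms in simp_all)
  ultimately show ?thesis
    by arith
qed

lemma dbl_round_rel_err:
  assumes round: "dbl_round x = ereal v" and "dbl_normal v"
  shows "\<bar>x - v\<bar> \<le> \<bar>x\<bar> / 2^52"
proof -
  have rne: "is_rne x v" and bound: "\<bar>x\<bar> < 2^1024 - 2^970"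
    using round by (simp_all add: dbl_round_eq_ereal_iff)
  obtain M E where v: "v = of_int M * 2 powi E" "2^52 \<le> \<bar>M\<bar>" "\<bar>M\<bar> < 2^53" "-1074 \<le> E" "E \<le> 971"
    using \<open>dbl_normal v\<close> by (rule dbl_normalE)
  have "real_of_int (2^52) \<le> real_of_int \<bar>M\<bar>"
    using v(2) by (simp only: of_int_le_iff)
  then have "(2^52 :: real) \<le> \<bar>of_int M\<bar>"
    by simp
  then have "2^52 * 2 powi E \<le> \<bar>of_int M\<bar> * (2::real) powi E"
    by (rule mult_right_mono) simp
  then have "2^52 * 2 powi E \<le> \<bar>v\<bar>"
    using v(1) by (simp add: abs_mult)
  moreover have "\<bar>x - v\<bar> \<le> 2 powi E / 2"
    using is_rne_err_le[OF rne bound v(1,3-5)] .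
  moreover have "\<bar>v\<bar> \<le> 2 * \<bar>x\<bar>"
    using is_rne_abs_le[OF rne] .
  ultimately show ?thesis
    by simp
qed

lemma is_decimal_dyadic: "is_decimal (of_int m * 2 powi e)"
proof (cases "0 \<le> e")
  case True
  then have "of_int m * (2::real) powi e = of_int (m * 2 ^ nat e) / 10^0"
    by (simp add: power_int_def)
  then show ?thesis
    unfolding is_decimal_def by blast
next
  case False
  then have "(2::real) powi e = 5 ^ nat (-e) / 10 ^ nat (-e)"
    by (simp add: power_int_def field_simps flip: power_mult_distrib)
  then have "of_int m * (2::real) powi e = of_int (m * 5 ^ nat (-e)) / 10 ^ nat (-e)"
    by simp
  then show ?thesis
    unfolding is_decimal_def by blast
qed

lemma sig_digitsE:
  assumes "is_decimal x"
  obtains m e where "x = of_int m * 10 powi e" "\<bar>m\<bar> < 10 ^ sig_digits x"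
proof -
  obtain m :: int and j :: nat where "x = of_int m / 10^j"
    using assms unfolding is_decimal_def by blast
  then have "x = of_int m * 10 powi (- int j)"
    by (simp add: power_int_minus divide_inverse)
  moreover have "nat \<bar>m\<bar> < 10 ^ nat \<bar>m\<bar>"
    by (rule order_less_le_trans[OF less_exp power_mono]) simp_all
  then have "\<bar>m\<bar> < 10 ^ nat \<bar>m\<bar>"
    by (simp add: nat_less_iff)
  ultimately have "\<exists>k m e. x = of_int m * 10 powi e \<and> \<bar>m\<bar> < 10^k"
    by blast
  then have "\<exists>m e. x = of_int m * 10 powi e \<and> \<bar>m\<bar> < 10 ^ sig_digits x"
    unfolding sig_digits_def by (rule LeastI_ex)
  then show ?thesis
    using that by blast
qed

lemma decimal_exponent_bounds:
  fixes m e :: int and x :: real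
  assumes x: "x = of_int m * 10 powi e" and m: "\<bar>m\<bar> < 10^K"
    and L: "0 < L" "L \<le> \<bar>x\<bar>" and U: "\<bar>x\<bar> \<le> U"
  shows "L / 10^K < 10 powi e" and "10 powi e \<le> U"
proof -
  have abs_x: "\<bar>x\<bar> = \<bar>of_int m\<bar> * 10 powi e"
    unfolding x by (simp add: abs_mult)
  have "real_of_int \<bar>m\<bar> < real_of_int (10^K)"
    using m by (simp only: of_int_less_iff)
  then have "\<bar>of_int m\<bar> * 10 powi e < (10^K :: real) * 10 powi e"
    by (intro mult_strict_right_mono) simp_all
  then have "L < 10^K * 10 powi e"
    using L abs_x by linarith
  then show "L / 10^K < 10 powi e"
    by (simp add: field_simps)
  have "m \<noteq> 0"
    using L x by auto
  then have "10 powi e \<le> \<bar>x\<bar>"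
    unfolding abs_x by simp
  then show "10 powi e \<le> U"
    using U by linarith
qed

lemma finite_bounded_decimals:
  assumes "0 < L"
  shows "finite {x :: real. \<exists>m e. x = of_int m * 10 powi e \<and> \<bar>m\<bar> < 10^K \<and> L \<le> \<bar>x\<bar> \<and> \<bar>x\<bar> \<le> U}"
proof -
  obtain p :: nat where p: "(1/10)^p < L / 10^K"
    using real_arch_pow_inv[of "L / 10^K" "1/10"] assms by auto
  obtain q :: nat where q: "U < 10^q"
    using real_arch_pow[of 10 U] by auto
  have exp_less: "e < e'" if "(10::real) powi e < 10 powi e'" for e e'
    using that power_int_increasing[of e' e "10::real"] by linarith
  have "{x. \<exists>m e. x = of_int m * 10 powi e \<and> \<bar>m\<bar> < 10^K \<and> L \<le> \<bar>x\<bar> \<and> \<bar>x\<bar> \<le> U}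
      \<subseteq> (\<lambda>(m, e). of_int m * 10 powi e) ` ({-(10^K)..10^K} \<times> {-int p..int q})"
  proof clarify
    fix m e
    assume "\<bar>m\<bar> < 10^K" "L \<le> \<bar>of_int m * (10::real) powi e\<bar>" "\<bar>of_int m * (10::real) powi e\<bar> \<le> U"
    note bounds = decimal_exponent_bounds[OF refl this(1) assms this(2,3)]
    have "(10::real) powi (- int p) = (1/10)^p"
      by (simp add: power_int_minus power_one_over inverse_eq_divide)
    also have "\<dots> < 10 powi e"
      using p bounds(1) by linarith
    finally have "- int p < e"
      by (rule exp_less)
    moreover have "10 powi e < (10::real) powi int q"
      using bounds(2) q by simp
    then have "e < int q"
      by (rule exp_less)
    ultimately show "of_int m * 10 powi e
        \<in> (\<lambda>(m, e). of_int m * 10 powi e) ` ({-(10^K)..10^K} \<times> {-int p..int q})"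
      using \<open>\<bar>m\<bar> < 10^K\<close> by (intro image_eqI[of _ _ "(m, e)"]) auto
  qed
  then show ?thesis
    by (rule finite_subset) simp
qed

lemma finite_dec_reps_sig_digits:
  assumes "v \<noteq> 0"
  shows "finite {x \<in> dec_reps v. sig_digits x = K}"
proof -
  have "{x \<in> dec_reps v. sig_digits x = K} \<subseteq>
      {x. \<exists>m e. x = of_int m * 10 powi e \<and> \<bar>m\<bar> < 10^K \<and> \<bar>v\<bar> / 2 \<le> \<bar>x\<bar> \<and> \<bar>x\<bar> \<le> 2^1024}"
  proof clarify
    fix x
    assume "x \<in> dec_reps v"
    then have "is_decimal x" "\<bar>x\<bar> < 2^1024 - 2^970" "is_rne x v"
      unfolding dec_reps_def by (simp_all add: dbl_round_eq_ereal_iff)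
    then show "\<exists>m e. x = of_int m * 10 powi e \<and> \<bar>m\<bar> < 10 ^ sig_digits x \<and> \<bar>v\<bar> / 2 \<le> \<bar>x\<bar> \<and> \<bar>x\<bar> \<le> 2^1024"
      using is_rne_abs_le by (force elim: sig_digitsE)
  qed
  moreover have "finite {x. \<exists>m e. x = of_int m * 10 powi e \<and> \<bar>m\<bar> < 10^K \<and> \<bar>v\<bar> / 2 \<le> \<bar>x\<bar> \<and> \<bar>x\<bar> \<le> 2^1024}"
    using assms by (intro finite_bounded_decimals) simp
  ultimately show ?thesis
    by (rule finite_subset)
qed

lemma decfmt_in_dec_reps:
  assumes "v \<in> dbl_finite" "v \<noteq> 0"
  shows "decfmt v \<in> dec_reps v"
proof -
  have "v \<in> dec_reps v"
    using assms by (auto simp: dec_reps_def dbl_round_dbl_finite elim: dbl_finiteE intro: is_decimal_dyadic)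
  then obtain x0 where x0: "x0 \<in> dec_reps v" and shortest: "\<forall>y\<in>dec_reps v. sig_digits x0 \<le> sig_digits y"
    using ex_has_least_nat[of "\<lambda>x. x \<in> dec_reps v" v sig_digits] by blast
  then have reps: "x0 \<in> shortest_reps v" "shortest_reps v = {x \<in> dec_reps v. sig_digits x = sig_digits x0}"
    unfolding shortest_reps_def by force+
  let ?dist = "\<lambda>x. \<bar>x - v\<bar>"
  have finite: "finite (shortest_reps v)"
    unfolding reps(2) using finite_dec_reps_sig_digits[OF assms(2)] .
  have nonempty: "shortest_reps v \<noteq> {}"
    using reps(1) by blast
  have "\<exists>x. x \<in> shortest_reps v \<and> (\<forall>y\<in>shortest_reps v. ?dist x \<le> ?dist y)"
    using arg_min_if_finite(1)[OF finite nonempty, of ?dist]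
      arg_min_least[OF finite nonempty, of _ ?dist] by blast
  then have "decfmt v \<in> shortest_reps v"
    unfolding decfmt_def by (rule someI2_ex) blast
  then show ?thesis
    unfolding shortest_reps_def by blast
qed

lemma DP_le_imp_mult_pow10_in_Ints:
  assumes "is_decimal x" "DP x \<le> a"
  shows "x * 10^a \<in> \<int>"
proof -
  obtain m :: int and j :: nat where "x = of_int m / 10^j"
    using assms(1) unfolding is_decimal_def by blast
  then have "x * 10^j \<in> \<int>"
    by simp
  then have "x * 10 ^ DP x \<in> \<int>"
    unfolding DP_def by (rule LeastI)
  then have "x * 10 ^ DP x * 10 ^ (a - DP x) \<in> \<int>"
    by (simp add: Ints_mult)
  then show ?thesis
    using assms(2) by (simp add: mult.assoc flip: power_add)
qed

lemma dbl_pow10_exact: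
  assumes "a \<le> 22"
  shows "dbl_pow10 a = 10^a"
proof -
  have "(5::int)^a \<le> 5^22"
    using assms by (intro power_increasing) simp_all
  then have "\<bar>(5::int)^a\<bar> < 2^53"
    by simp
  then have "of_int (5^a) * (2::real) powi int a \<in> dbl_finite"
    using assms by (intro dbl_finiteI) simp_all
  then have "(10::real)^a \<in> dbl_finite"
    by (simp flip: power_mult_distrib)
  then show ?thesis
    unfolding dbl_pow10_def by (simp add: dbl_round_dbl_finite)
qed

lemma abs_mult_power10_less:
  fixes x :: real
  assumes "int a + \<lfloor>log 10 \<bar>x\<bar>\<rfloor> + 1 \<le> int k"
  shows "\<bar>x\<bar> * 10^a < 10^k"
proof (cases "x = 0")
  case False
  have "log 10 \<bar>x\<bar> < real k - real a"
    using assms by linarith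
  then have "\<bar>x\<bar> < 10 powr (real k - real a)"
    using False by (simp add: log_less_iff)
  then show ?thesis
    by (simp add: powr_diff powr_realpow field_simps)
qed simp

lemma round_int_eqI: "\<bar>r - of_int N\<bar> < 1/2 \<Longrightarrow> round_int r = N"
  unfolding round_int_def by (subst floor_eq_iff) linarith

lemma round_int_dbl_round_near_int:
  assumes "\<bar>N\<bar> < 2^53" "\<bar>x - of_int N\<bar> < 1/4"
  shows "round_int (real_of_ereal (dbl_round x)) = N"
proof -
  have N: "of_int N \<in> dbl_finite"
    using dbl_finiteI[OF assms(1), of 0] by simp
  obtain r where r: "is_rne x r"
    using is_rne_exists by blast
  have "real_of_int \<bar>N\<bar> < real_of_int (2^53)"
    using assms(1) by (simp only: of_int_less_iff)
  then have "\<bar>of_int N\<bar> < (2^53 :: real)"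
    by simp
  then have "\<bar>x\<bar> < 2^53 + 1"
    using assms(2) by arith
  also have "(2::real)^53 + 1 < 2^1024 - 2^970"
    by simp
  finally have "\<bar>x\<bar> < 2^1024 - 2^970" .
  then have "dbl_round x = ereal r"
    using r by (simp add: dbl_round_eq_ereal_iff)
  moreover have "\<bar>x - r\<bar> \<le> \<bar>x - of_int N\<bar>"
    using r N unfolding is_rne_def by blast
  then have "round_int r = N"
    using assms(2) by (intro round_int_eqI) arith
  ultimately show ?thesis
    by simp
qed

lemma decfmt_scaled_intE:
  assumes "dbl_normal v" and DP: "DP (decfmt v) \<le> a"
    and digits: "int a + \<lfloor>log 10 \<bar>decfmt v\<bar>\<rfloor> + 1 \<le> 15"
  obtains N where "decfmt v * 10^a = of_int N" "\<bar>of_int N\<bar> < (2^50 :: real)"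
proof -
  have "v \<in> dbl_finite" "v \<noteq> 0"
    using \<open>dbl_normal v\<close> unfolding dbl_normal_def by auto
  then have "is_decimal (decfmt v)"
    using decfmt_in_dec_reps unfolding dec_reps_def by blast
  then have "decfmt v * 10^a \<in> \<int>"
    using DP_le_imp_mult_pow10_in_Ints DP by blast
  then obtain N where N: "decfmt v * 10^a = of_int N"
    by (rule Ints_cases)
  have "\<bar>of_int N\<bar> = \<bar>decfmt v\<bar> * (10::real)^a"
    unfolding N[symmetric] by (simp add: abs_mult)
  also have "\<dots> < 10^15"
    using abs_mult_power10_less[of a "decfmt v" 15] digits by simp
  also have "(10::real)^15 < 2^50"
    by simp
  finally show ?thesis
    using N that by blast
qed

lemma scaled_integer_round_trip:
  assumes "dbl_normal v" and "DP (decfmt v) \<le> a" and "a \<le> 22"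
    and "int a + \<lfloor>log 10 \<bar>decfmt v\<bar>\<rfloor> + 1 \<le> 15"
  shows "ddiv (real_of_ereal (dbl_round (of_int (round_int (real_of_ereal (dmul v (dbl_pow10 a)))))))
      (dbl_pow10 a) = ereal v"
proof -
  define d where "d = decfmt v"
  obtain N where N: "d * 10^a = of_int N" and N_small: "\<bar>of_int N\<bar> < (2^50 :: real)"
    using decfmt_scaled_intE[OF assms(1,2,4)] unfolding d_def by blast
  have d_round: "dbl_round d = ereal v"
    using decfmt_in_dec_reps \<open>dbl_normal v\<close> unfolding d_def dec_reps_def dbl_normal_def by auto
  have "real_of_int \<bar>N\<bar> < real_of_int (2^53)"
    using N_small by simp
  then have "\<bar>N\<bar> < 2^53"
    by (simp only: of_int_less_iff)
  have "\<bar>v * 10^a - of_int N\<bar> = \<bar>d - v\<bar> * 10^a"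
    unfolding N[symmetric] by (simp add: abs_mult flip: abs_minus_commute left_diff_distrib)
  also have "\<dots> \<le> \<bar>d\<bar> / 2^52 * 10^a"
    using dbl_round_rel_err[OF d_round \<open>dbl_normal v\<close>] by (simp add: mult_right_mono)
  also have "\<dots> < 1/4"
    using N N_small by (simp add: abs_mult)
  finally have "round_int (real_of_ereal (dmul v (10^a))) = N"
    unfolding dmul_def using \<open>\<bar>N\<bar> < 2^53\<close> round_int_dbl_round_near_int by simp
  moreover have "of_int N / 10^a = d"
    using N by (simp add: field_simps)
  ultimately show ?thesis
    using d_round dbl_finiteI[OF \<open>\<bar>N\<bar> < 2^53\<close>, of 0]
    by (simp add: dbl_pow10_exact[OF \<open>a \<le> 22\<close>] ddiv_def dbl_round_dbl_finite)
qed

theorem theorem5: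
  fixes v :: "nat \<Rightarrow> real" and n :: nat
  assumes n_pos: "1 \<le> n"
    and vals: "\<forall>i\<in>{1..n}. v i = 0 \<or> dbl_normal (v i)"
    and amax: "\<alpha>max = Max ((\<lambda>i. DP (decfmt (v i))) ` {1..n})"
    and beta: "\<forall>i. \<beta> i = (if v i = 0 then 0
                   else int \<alpha>max + \<lfloor>log 10 \<bar>decfmt (v i)\<bar>\<rfloor> + 1)"
    and bmax: "\<beta>max = Max (\<beta> ` {1..n})"
    and g: "\<forall>i. g i = round_int (real_of_ereal (dmul (v i) (dbl_pow10 \<alpha>max)))"
    and a22: "\<alpha>max \<le> 22"
    and b15: "\<beta>max \<le> 15"
  shows "\<forall>i\<in>{1..n}. ereal (v i) =
           ddiv (real_of_ereal (dbl_round (of_int (g i)))) (dbl_pow10 \<alpha>max)"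
proof
  fix i
  assume i: "i \<in> {1..n}"
  show "ereal (v i) = ddiv (real_of_ereal (dbl_round (of_int (g i)))) (dbl_pow10 \<alpha>max)"
  proof (cases "v i = 0")
    case True
    then show ?thesis
      using g by (simp add: dmul_def ddiv_def round_int_def dbl_round_dbl_finite zero_dbl_finite)
  next
    case False
    have "dbl_normal (v i)"
      using False vals i by blast
    moreover have "DP (decfmt (v i)) \<le> \<alpha>max"
      unfolding amax using i by (intro Max_ge) auto
    moreover have "\<beta> i \<le> \<beta>max"
      unfolding bmax using i by (intro Max_ge) auto
    then have "int \<alpha>max + \<lfloor>log 10 \<bar>decfmt (v i)\<bar>\<rfloor> + 1 \<le> 15"
      using False beta b15 by simp
    ultimately show ?thesis
      unfolding g[rule_format] using scaled_integer_round_trip a22 by simp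
  qed
qed

end
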